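(* Let $\{\gamma_n\}_{n\ge1}$ be a deterministic positive sequence with $\sum_k\gamma_k=\infty$, $\sum_k\gamma_k^2<\infty$ and $\log(\gamma_{k-1}/\gamma_k)=o(\gamma_k)$, and let $A$ be a deterministic $d\times d$ Hurwitz matrix. Let $\{x_n\}_{n\ge0}$ be $\mathbb R^d$-valued random variables satisfying $$x_{n+1}=x_n+\gamma_{n+1}Ax_n+\gamma_{n+1}\zeta_{n+1}^{(1)}+\gamma_{n+1}\zeta_{n+1}^{(2)},\qquad n\ge0,$$ where $$\sum_{k=1}^n\gamma_k\Big(\prod_{j=k+1}^{n+1}(\mathrm{Id}+\gamma_jA)\Big)\zeta_k^{(1)}\mathbf 1_{\lim_qx_q=0}=\sqrt{\gamma_n}\,O_{w.p.1}(1)O_{L^2}(1),\qquad |\zeta_n^{(2)}|\mathbf 1_{\lim_qx_q=0}=|x_n|^2\,O_{w.p.1}(1).$$ Then $\gamma_n^{-1}|x_n|^2\mathbf 1_{\lim_qx_q=0}=O_{w.p.1}(1)O_{L^1}(1)$.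
   Context: $|\cdot|$ Euclidean norm; $\mathrm{Id}$ identity; a Hurwitz matrix has all eigenvalues with negative real part. $Z_n=O_{w.p.1}(1)$ means $\sup_n|Z_n|<\infty$ a.s.; $O_{L^p}(1)$ means $\sup_n\mathbb E|Z_n|^p<\infty$; a product $O_{w.p.1}(1)O_{L^p}(1)$ denotes $W_n\bar W_n$ with $W_n=O_{w.p.1}(1)$, $\bar W_n=O_{L^p}(1)$. *)

theory Defs
  imports "HOL-Probability.Probability" "HOL-Library.Landau_Symbols"
begin

definition hurwitz :: "real^'d^'d \<Rightarrow> bool" where
  "hurwitz A \<longleftrightarrow>
     (\<forall>z::complex. det (mat z - (\<chi> i j. complex_of_real (A $ i $ j))) = 0 \<longrightarrow> Re z < 0)"

definition mat_prod_range :: "(nat \<Rightarrow> real^'d^'d) \<Rightarrow> nat \<Rightarrow> nat \<Rightarrow> real^'d^'d" where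
  "mat_prod_range f m n = foldr (\<lambda>j P. f j ** P) [m..<Suc n] (mat 1)"

definition O_wp1 :: "'a measure \<Rightarrow> (nat \<Rightarrow> 'a \<Rightarrow> real) \<Rightarrow> bool" where
  "O_wp1 M W \<longleftrightarrow> (\<forall>n. W n \<in> borel_measurable M) \<and>
     (AE \<omega> in M. \<exists>B. \<forall>n. \<bar>W n \<omega>\<bar> \<le> B)"

definition O_Lp :: "'a measure \<Rightarrow> real \<Rightarrow> (nat \<Rightarrow> 'a \<Rightarrow> 'b::euclidean_space) \<Rightarrow> bool" where
  "O_Lp M p W \<longleftrightarrow> (\<forall>n. W n \<in> borel_measurable M) \<and>
     (\<exists>C::real. \<forall>n. (\<integral>\<^sup>+ \<omega>. ennreal (norm (W n \<omega>) powr p) \<partial>M) \<le> ennreal C)"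

end

theory Submission
  imports Defs "Jordan_Normal_Form.Spectral_Radius"
begin

(*
  Since A is Hurwitz, for a small step h and some \<rho> < 1 the matrix B = (I + hA)/\<rho> has all its
  eigenvalues in the unit disc, hence bounded powers, and sup_k |B^k v| is an equivalent norm in
  which every Euler step v \<mapsto> v + tAv with 0 \<le> t \<le> h contracts by the factor 1 - ct.
  Write x_n = y_n + T_n, where T_n accumulates the first noise through the Euler factors, so that
  (I + \<gamma>_(n+1) A) T_n is the sum in the first noise hypothesis and |T_n|^2 \<le> \<gamma>_n O(1) |V_n|^2,
  V_n being its L^2-bounded factor. On the event x_n \<rightarrow> 0 the quadratic noise is eventually a
  small multiple of |x_n|, so y_n follows a slightly perturbed contracting Euler scheme. Squaring,
  dividing by the step size and using \<gamma>_n / \<gamma>_(n+1) \<le> 1 + (c/4) \<gamma>_(n+1) (from the logarithmic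
  condition) gives for q_n = |y_n|^2 / \<gamma>_n the recursion
  q_(n+1) \<le> (1 - (c/2) \<gamma>_(n+1)) q_n + \<gamma>_(n+1) O(1) |V_(n+1)|^2. Comparing with the running average
  R_n of |V_n|^2 with the same damping, whose expectation stays bounded, yields
  |x_n|^2 / \<gamma>_n \<le> C(\<omega>) (1 + R_n + |V_n|^2): a pathwise bounded factor times an L^1-bounded one.
*)

section \<open>Real sequences\<close>

lemma power2_sum_le: "(a + b)\<^sup>2 \<le> 2 * a\<^sup>2 + 2 * (b :: real)\<^sup>2"
proof -
  have "2 * a\<^sup>2 + 2 * b\<^sup>2 - (a + b)\<^sup>2 = (a - b)\<^sup>2" by (simp add: power2_eq_square algebra_simps)
  thus ?thesis by (metis diff_ge_0_iff_ge zero_le_power2)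
qed

lemma power2_le_convex_step:
  fixes \<alpha> e e' \<beta> :: real
  assumes "0 < \<alpha>" "\<alpha> \<le> 1" "0 \<le> e'" "e' \<le> (1 - \<alpha>) * e + \<beta>"
  shows "e'\<^sup>2 \<le> (1 - \<alpha>) * e\<^sup>2 + \<beta>\<^sup>2 / \<alpha>"
proof -
  have sq: "e'\<^sup>2 \<le> ((1 - \<alpha>) * e + \<beta>)\<^sup>2"
    using assms by (intro power_mono) auto
  have "\<alpha> * ((1 - \<alpha>) * e\<^sup>2 + \<beta>\<^sup>2 / \<alpha>) - \<alpha> * ((1 - \<alpha>) * e + \<beta>)\<^sup>2 = (1 - \<alpha>) * (\<alpha> * e - \<beta>)\<^sup>2"
    using assms by (simp add: power2_eq_square field_simps)
  moreover have "0 \<le> (1 - \<alpha>) * (\<alpha> * e - \<beta>)\<^sup>2" using assms by simp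
  ultimately have "\<alpha> * ((1 - \<alpha>) * e + \<beta>)\<^sup>2 \<le> \<alpha> * ((1 - \<alpha>) * e\<^sup>2 + \<beta>\<^sup>2 / \<alpha>)"
    by linarith
  hence "((1 - \<alpha>) * e + \<beta>)\<^sup>2 \<le> (1 - \<alpha>) * e\<^sup>2 + \<beta>\<^sup>2 / \<alpha>"
    using assms by (simp add: mult_le_cancel_left_pos)
  with sq show ?thesis by linarith
qed

lemma recursive_inequality_comparison:
  fixes q r a b :: "nat \<Rightarrow> real"
  assumes q: "\<And>n. N \<le> n \<Longrightarrow> q (Suc n) \<le> a n * q n + b n"
    and r: "\<And>n. N \<le> n \<Longrightarrow> r (Suc n) = a n * r n + b n"
    and a: "\<And>n. N \<le> n \<Longrightarrow> 0 \<le> a n \<and> a n \<le> 1"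
    and "N \<le> n"
  shows "q n \<le> r n + max (q N - r N) 0"
  using \<open>N \<le> n\<close>
proof (induction n rule: dec_induct)
  case (step m)
  let ?P = "max (q N - r N) 0"
  have "q (Suc m) \<le> a m * (r m + ?P) + b m"
    using q[OF step.hyps(1)] mult_left_mono[OF step.IH, of "a m"] a[OF step.hyps(1)] by linarith
  also have "\<dots> \<le> r (Suc m) + ?P"
    using r[OF step.hyps(1)] a[OF step.hyps(1)] mult_left_le_one_le[of ?P "a m"] by (simp add: algebra_simps)
  finally show ?case .
qed simp

lemma summable_power2_LIMSEQ_zero:
  fixes f :: "nat \<Rightarrow> real"
  assumes "summable (\<lambda>k. (f k)\<^sup>2)"
  shows "f \<longlonglongrightarrow> 0"
proof -
  have "(\<lambda>k. sqrt ((f k)\<^sup>2)) \<longlonglongrightarrow> sqrt 0"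
    by (intro tendsto_real_sqrt summable_LIMSEQ_zero[OF assms])
  thus ?thesis by (simp add: tendsto_rabs_zero_iff)
qed

lemma eventually_nonneg_mult_le_1:
  fixes \<gamma> :: "nat \<Rightarrow> real"
  assumes "\<gamma> \<longlonglongrightarrow> 0" and "\<forall>\<^sub>F n in sequentially. 0 \<le> \<gamma> n" and "0 < b"
  shows "\<forall>\<^sub>F n in sequentially. 0 \<le> \<gamma> n \<and> b * \<gamma> n \<le> 1"
proof -
  have "\<forall>\<^sub>F n in sequentially. b * \<gamma> n < 1"
    using tendsto_mult_right_zero[OF assms(1), of b] by (rule order_tendstoD(2)) simp
  with assms(2) show ?thesis by eventually_elim simp
qed

lemma damping_factors_eventually_nonneg:
  fixes \<gamma> :: "nat \<Rightarrow> real"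
  assumes "summable (\<lambda>k. (\<gamma> k)\<^sup>2)" and "\<forall>n\<ge>1. 0 < \<gamma> n" and "0 < b"
  shows "\<exists>N. \<forall>m\<ge>N. 0 \<le> 1 - b * \<gamma> (Suc m) \<and> 0 \<le> \<gamma> (Suc m)"
proof -
  have "\<forall>\<^sub>F n in sequentially. 0 \<le> \<gamma> n"
    using eventually_ge_at_top[of 1] by (rule eventually_mono) (use assms(2) in auto)
  hence "\<forall>\<^sub>F n in sequentially. 0 \<le> \<gamma> n \<and> b * \<gamma> n \<le> 1"
    using eventually_nonneg_mult_le_1[OF summable_power2_LIMSEQ_zero[OF assms(1)]] assms(3) by blast
  hence "\<forall>\<^sub>F n in sequentially. 0 \<le> 1 - b * \<gamma> (Suc n) \<and> 0 \<le> \<gamma> (Suc n)"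
    by (intro eventually_sequentially_Suc[THEN iffD2]) (auto elim: eventually_mono)
  thus ?thesis unfolding eventually_sequentially by blast
qed

lemma abs_divide_le_of_le_mult:
  fixes a z C :: real
  assumes "\<bar>a\<bar> \<le> C * z" and "0 < z"
  shows "\<bar>a / z\<bar> \<le> C"
  using assms by (simp add: abs_divide pos_divide_le_eq mult.commute)

lemma eventually_ratio_le:
  fixes \<gamma> :: "nat \<Rightarrow> real"
  assumes log: "(\<lambda>k. ln (\<gamma> k / \<gamma> (Suc k))) \<in> o(\<lambda>k. \<gamma> (Suc k))" and \<gamma>0: "\<gamma> \<longlonglongrightarrow> 0"
    and pos: "\<forall>\<^sub>F k in sequentially. 0 < \<gamma> k" and "0 < \<epsilon>"
  shows "\<forall>\<^sub>F k in sequentially. \<gamma> k / \<gamma> (Suc k) \<le> 1 + \<epsilon> * \<gamma> (Suc k)"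
proof -
  have "(\<lambda>k. \<epsilon>/2 * \<gamma> k) \<longlonglongrightarrow> 0"
    by (rule tendsto_mult_right_zero[OF \<gamma>0])
  hence "\<forall>\<^sub>F k in sequentially. \<epsilon>/2 * \<gamma> k < 1"
    by (rule order_tendstoD(2)) simp
  hence small: "\<forall>\<^sub>F k in sequentially. \<epsilon>/2 * \<gamma> (Suc k) < 1"
    by (rule eventually_sequentially_Suc[THEN iffD2])
  have pos': "\<forall>\<^sub>F k in sequentially. 0 < \<gamma> (Suc k)"
    using pos by (rule eventually_sequentially_Suc[THEN iffD2])
  have "\<forall>\<^sub>F k in sequentially. norm (ln (\<gamma> k / \<gamma> (Suc k))) \<le> \<epsilon>/2 * norm (\<gamma> (Suc k))"
    using landau_o.smallD[OF log, of "\<epsilon>/2"] \<open>0 < \<epsilon>\<close> by simp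
  with pos pos' small show ?thesis
  proof eventually_elim
    case (elim k)
    define x where "x = \<epsilon>/2 * \<gamma> (Suc k)"
    have x: "0 \<le> x" "x \<le> 1" using elim \<open>0 < \<epsilon>\<close> by (auto simp: x_def)
    have "\<gamma> k / \<gamma> (Suc k) = exp (ln (\<gamma> k / \<gamma> (Suc k)))" using elim by simp
    also have "\<dots> \<le> exp x"
      using abs_ge_self[of "ln (\<gamma> k / \<gamma> (Suc k))"] elim(2,4) by (intro exp_mono) (simp add: x_def)
    also have "\<dots> \<le> 1 + x + x\<^sup>2" by (rule exp_bound[OF x])
    also have "\<dots> \<le> 1 + 2 * x" using x by (simp add: power2_eq_square mult_left_le)
    finally show ?case by (simp add: x_def)
  qed
qed

lemma eventually_le_multiple_imp_le_multiple:
  fixes f z :: "nat \<Rightarrow> real"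
  assumes "\<forall>\<^sub>F n in sequentially. f n \<le> C * z n" and z: "\<And>n. 1 \<le> z n"
  shows "\<exists>C'. \<forall>n. f n \<le> C' * z n"
proof -
  obtain N where N: "\<And>n. N \<le> n \<Longrightarrow> f n \<le> C * z n"
    using assms(1) unfolding eventually_sequentially by blast
  define C' where "C' = \<bar>C\<bar> + (\<Sum>m<N. \<bar>f m\<bar>)"
  have "0 \<le> (\<Sum>m<N. \<bar>f m\<bar>)" by (simp add: sum_nonneg)
  hence "C \<le> C'" "0 \<le> C'" unfolding C'_def by linarith+
  have "f n \<le> C' * z n" for n
  proof (cases "N \<le> n")
    case True
    have "C * z n \<le> C' * z n"
      using z[of n] \<open>C \<le> C'\<close> by (intro mult_right_mono) auto
    thus ?thesis using N[OF True] by linarith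
  next
    case False
    hence "\<bar>f n\<bar> \<le> (\<Sum>m<N. \<bar>f m\<bar>)" by (intro member_le_sum) auto
    hence "f n \<le> C'" unfolding C'_def by linarith
    also have "C' \<le> C' * z n"
      using z[of n] \<open>0 \<le> C'\<close> by (simp add: mult_le_cancel_left1)
    finally show ?thesis .
  qed
  thus ?thesis by blast
qed

section \<open>Cartesian matrices as Jordan normal form matrices\<close>

hide_const (open) Matrix.vec Matrix.mat Matrix.row Matrix.col Determinant.det
no_notation Matrix.vec_index (infixl \<open>$\<close> 100)

text \<open>The Jordan normal form library works with matrices indexed by natural numbers; an enumeration
  h of the finite index type translates between the two representations.\<close>

definition jnf_mat :: "(nat \<Rightarrow> 'n::finite) \<Rightarrow> nat \<Rightarrow> 'a^'n^'n \<Rightarrow> 'a Matrix.mat" where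
  "jnf_mat h n C = Matrix.mat n n (\<lambda>(i, j). C $ h i $ h j)"

definition jnf_vec :: "(nat \<Rightarrow> 'n::finite) \<Rightarrow> nat \<Rightarrow> 'a^'n \<Rightarrow> 'a Matrix.vec" where
  "jnf_vec h n w = Matrix.vec n (\<lambda>i. w $ h i)"

lemma jnf_mat_carrier [simp]: "jnf_mat h n C \<in> carrier_mat n n"
  and dim_row_jnf_mat [simp]: "dim_row (jnf_mat h n C) = n"
  and dim_col_jnf_mat [simp]: "dim_col (jnf_mat h n C) = n"
  by (simp_all add: jnf_mat_def)

lemma jnf_vec_carrier [simp]: "jnf_vec h n w \<in> carrier_vec n"
  by (simp add: jnf_vec_def)

context
  fixes h :: "nat \<Rightarrow> 'n::finite" and n :: nat
  assumes h: "bij_betw h {..<n} UNIV"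
begin

lemma jnf_mat_mult_vec:
  "jnf_mat h n (C :: 'a::comm_semiring_1^'n^'n) *\<^sub>v jnf_vec h n w = jnf_vec h n (C *v w)"
proof (rule eq_vecI)
  fix i assume "i < dim_vec (jnf_vec h n (C *v w))"
  hence i: "i < n" by (simp add: jnf_vec_def)
  have "vec_index (jnf_mat h n C *\<^sub>v jnf_vec h n w) i = (\<Sum>l<n. C $ h i $ h l * w $ h l)"
    using i by (simp add: jnf_mat_def jnf_vec_def scalar_prod_def atLeast0LessThan)
  also have "\<dots> = (\<Sum>l\<in>UNIV. C $ h i $ l * w $ l)"
    using sum.reindex_bij_betw[OF h, of "\<lambda>l. C $ h i $ l * w $ l"] by simp
  finally show "vec_index (jnf_mat h n C *\<^sub>v jnf_vec h n w) i = vec_index (jnf_vec h n (C *v w)) i"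
    using i by (simp add: jnf_vec_def matrix_vector_mult_def)
qed (simp add: jnf_mat_def jnf_vec_def)

lemma jnf_vec_inject: "jnf_vec h n w = jnf_vec h n w' \<longleftrightarrow> w = w'"
proof
  assume eq: "jnf_vec h n w = jnf_vec h n w'"
  have "w $ h i = w' $ h i" if "i < n" for i
    using arg_cong[OF eq, of "\<lambda>v. vec_index v i"] that by (simp add: jnf_vec_def)
  moreover have "UNIV = h ` {..<n}" using h by (simp add: bij_betw_def)
  ultimately show "w = w'"
    by (metis (no_types, lifting) Finite_Cartesian_Product.vec_eq_iff UNIV_I imageE lessThan_iff)
qed simp

lemma jnf_vec_surj:
  assumes "v \<in> carrier_vec n"
  obtains w where "jnf_vec h n w = v"
proof
  have "the_inv_into {..<n} h (h i) = i" if "i < n" for i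
    using h that by (intro the_inv_into_f_f) (auto simp: bij_betw_def)
  thus "jnf_vec h n (\<chi> j. vec_index v (the_inv_into {..<n} h j)) = v"
    using assms by (intro eq_vecI) (auto simp: jnf_vec_def)
qed

lemma eigenvalue_jnf_mat_iff:
  "eigenvalue (jnf_mat h n (C :: 'a::field^'n^'n)) \<mu> \<longleftrightarrow> (\<exists>w. w \<noteq> 0 \<and> C *v w = \<mu> *s w)"
proof -
  have zero: "jnf_vec h n 0 = 0\<^sub>v n" and smult: "jnf_vec h n (\<mu> *s w) = \<mu> \<cdot>\<^sub>v jnf_vec h n w" for w
    by (auto simp: jnf_vec_def)
  have "eigenvalue (jnf_mat h n C) \<mu> \<longleftrightarrow>
      (\<exists>v\<in>carrier_vec n. v \<noteq> 0\<^sub>v n \<and> jnf_mat h n C *\<^sub>v v = \<mu> \<cdot>\<^sub>v v)"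
    by (auto simp: eigenvalue_def eigenvector_def jnf_mat_def)
  also have "\<dots> \<longleftrightarrow> (\<exists>w. jnf_vec h n w \<noteq> 0\<^sub>v n \<and> jnf_mat h n C *\<^sub>v jnf_vec h n w = \<mu> \<cdot>\<^sub>v jnf_vec h n w)"
    by (metis jnf_vec_carrier jnf_vec_surj)
  also have "\<dots> \<longleftrightarrow> (\<exists>w. w \<noteq> 0 \<and> C *v w = \<mu> *s w)"
    by (metis zero smult jnf_mat_mult_vec jnf_vec_inject)
  finally show ?thesis .
qed

lemma jnf_vec_funpow:
  "jnf_vec h n (((*v) (C :: 'a::comm_semiring_1^'n^'n) ^^ k) w) = jnf_mat h n C ^\<^sub>m k *\<^sub>v jnf_vec h n w"
proof (induction k arbitrary: w)
  case 0
  show ?case using one_mult_mat_vec[OF jnf_vec_carrier] by (simp add: jnf_mat_def)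
next
  case (Suc k)
  have "jnf_vec h n (((*v) C ^^ Suc k) w) = jnf_mat h n C ^\<^sub>m k *\<^sub>v (jnf_mat h n C *\<^sub>v jnf_vec h n w)"
    by (simp add: funpow_Suc_right Suc jnf_mat_mult_vec del: funpow.simps)
  also have "\<dots> = jnf_mat h n C ^\<^sub>m Suc k *\<^sub>v jnf_vec h n w"
    by (simp add: assoc_mult_mat_vec[of _ n n _ n])
  finally show ?case .
qed

end

lemma finite_eigenvalues: "finite {\<mu>. \<exists>w. w \<noteq> 0 \<and> (C :: 'a::field^'n^'n) *v w = \<mu> *s w}"
proof -
  obtain h where h: "bij_betw h {..<CARD('n)} (UNIV :: 'n set)"
    using ex_bij_betw_nat_finite[of "UNIV :: 'n set"] by (auto simp: atLeast0LessThan)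
  have "{\<mu>. \<exists>w. w \<noteq> 0 \<and> C *v w = \<mu> *s w} = spectrum (jnf_mat h CARD('n) C)"
    unfolding spectrum_def using eigenvalue_jnf_mat_iff[OF h] by auto
  thus ?thesis using card_finite_spectrum(1)[OF jnf_mat_carrier] by simp
qed

section \<open>Power-bounded matrices and adapted norms\<close>

lemma eigenvalues_in_unit_disc_power_bounded:
  fixes C :: "complex^'n^'n"
  assumes disc: "\<And>\<mu> w. w \<noteq> 0 \<Longrightarrow> C *v w = \<mu> *s w \<Longrightarrow> cmod \<mu> < 1"
  shows "\<exists>b\<ge>0. \<forall>k w i. cmod ((((*v) C ^^ k) w) $ i) \<le> b * (\<Sum>j\<in>UNIV. cmod (w $ j))"
proof -
  define n where "n = CARD('n)"
  obtain h where h: "bij_betw h {..<n} (UNIV :: 'n set)"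
    using ex_bij_betw_nat_finite[of "UNIV :: 'n set"] by (auto simp: n_def atLeast0LessThan)
  define M where "M = jnf_mat h n C"
  have "spectral_radius M < 1"
  proof -
    have "finite (spectrum M)" "spectrum M \<noteq> {}"
      using card_finite_spectrum(1)[OF jnf_mat_carrier] spectrum_non_empty[of M n]
      by (auto simp: M_def n_def)
    moreover have "cmod \<mu> < 1" if "\<mu> \<in> spectrum M" for \<mu>
    proof -
      have "eigenvalue M \<mu>" using that by (simp add: spectrum_def)
      then obtain w where "w \<noteq> 0" "C *v w = \<mu> *s w"
        unfolding M_def eigenvalue_jnf_mat_iff[OF h] by blast
      thus ?thesis by (rule disc)
    qed
    ultimately show ?thesis by (simp add: spectral_radius_def)
  qed
  then obtain b where b: "norm_bound (M ^\<^sub>m k) b" for k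
    using spectral_radius_jnf_norm_bound_less_1_upper_triangular[of M n] by (auto simp: M_def)
  have "cmod ((((*v) C ^^ k) w) $ i) \<le> max b 0 * (\<Sum>j\<in>UNIV. cmod (w $ j))" for k w i
  proof -
    obtain i' where i': "i' < n" "i = h i'" using h by (force simp: bij_betw_def)
    have "(((*v) C ^^ k) w) $ i = (\<Sum>j<n. (M ^\<^sub>m k) $$ (i', j) * w $ h j)"
      using arg_cong[OF jnf_vec_funpow[OF h, where C = C and k = k and w = w], of "\<lambda>v. vec_index v i'"] i'
      by (simp add: M_def jnf_vec_def scalar_prod_def atLeast0LessThan jnf_mat_def)
    also have "cmod \<dots> \<le> (\<Sum>j<n. max b 0 * cmod (w $ h j))"
    proof (rule sum_norm_le)
      fix j assume "j \<in> {..<n}"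
      hence "cmod ((M ^\<^sub>m k) $$ (i', j)) \<le> max b 0"
        using b[of k] i' \<open>j \<in> {..<n}\<close> unfolding norm_bound_def M_def
        by (auto intro: order_trans[OF _ max.cobounded1])
      thus "cmod ((M ^\<^sub>m k) $$ (i', j) * w $ h j) \<le> max b 0 * cmod (w $ h j)"
        by (simp add: norm_mult mult_right_mono)
    qed
    also have "\<dots> = max b 0 * (\<Sum>j\<in>UNIV. cmod (w $ j))"
      using sum.reindex_bij_betw[OF h, of "\<lambda>j. cmod (w $ j)"] by (simp add: sum_distrib_left[symmetric])
    finally show ?thesis .
  qed
  thus ?thesis by (intro exI[of _ "max b 0"]) auto
qed

definition of_real_mat :: "real^'n^'m \<Rightarrow> complex^'n^'m" where
  "of_real_mat B = (\<chi> i j. complex_of_real (B $ i $ j))"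

definition of_real_vec :: "real^'n \<Rightarrow> complex^'n" where
  "of_real_vec v = (\<chi> i. complex_of_real (v $ i))"

lemma of_real_mat_mult_vec: "of_real_mat B *v of_real_vec v = of_real_vec (B *v v)"
  by (simp add: of_real_mat_def of_real_vec_def matrix_vector_mult_def Finite_Cartesian_Product.vec_eq_iff)

lemma power_bounded_of_eigenvalues_in_unit_disc:
  fixes B :: "real^'n^'n"
  assumes "\<And>\<mu> w. w \<noteq> 0 \<Longrightarrow> of_real_mat B *v w = \<mu> *s w \<Longrightarrow> cmod \<mu> < 1"
  shows "\<exists>K. \<forall>k v. norm (((*v) B ^^ k) v) \<le> K * norm v"
proof -
  have "\<exists>b\<ge>0. \<forall>k w i. cmod ((((*v) (of_real_mat B) ^^ k) w) $ i) \<le> b * (\<Sum>j\<in>UNIV. cmod (w $ j))"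
    by (rule eigenvalues_in_unit_disc_power_bounded) (rule assms)
  then obtain b where "b \<ge> 0" and b: "\<And>k w i. cmod ((((*v) (of_real_mat B) ^^ k) w) $ i) \<le> b * (\<Sum>j\<in>UNIV. cmod (w $ j))"
    by blast
  have iter: "((*v) (of_real_mat B) ^^ k) (of_real_vec v) = of_real_vec (((*v) B ^^ k) v)" for k v
    by (induction k) (simp_all add: of_real_mat_mult_vec)
  define n where "n = real CARD('n)"
  have "norm (((*v) B ^^ k) v) \<le> n * b * n * norm v" for k v
  proof -
    have comp: "\<bar>(((*v) B ^^ k) v) $ i\<bar> \<le> b * n * norm v" for i
    proof -
      have "\<bar>(((*v) B ^^ k) v) $ i\<bar> \<le> b * (\<Sum>j\<in>UNIV. \<bar>v $ j\<bar>)"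
        using b[of k "of_real_vec v" i] unfolding iter by (simp add: of_real_vec_def)
      also have "\<dots> \<le> b * (\<Sum>j\<in>(UNIV :: 'n set). norm v)"
        using \<open>b \<ge> 0\<close> by (intro mult_left_mono sum_mono component_le_norm_cart) auto
      finally show ?thesis by (simp add: n_def)
    qed
    have "norm (((*v) B ^^ k) v) \<le> (\<Sum>i\<in>UNIV. \<bar>(((*v) B ^^ k) v) $ i\<bar>)"
      by (rule norm_le_l1_cart)
    also have "\<dots> \<le> (\<Sum>i\<in>(UNIV :: 'n set). b * n * norm v)"
      by (intro sum_mono comp)
    finally show ?thesis by (simp add: n_def)
  qed
  thus ?thesis by blast
qed

lemma power_bounded_adapted_norm:
  fixes f :: "'a::real_normed_vector \<Rightarrow> 'a"
  assumes f: "linear f" and bounded: "\<And>k v. norm ((f ^^ k) v) \<le> K * norm v"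
  obtains nrm where "\<And>v. norm v \<le> nrm v" "\<And>v. nrm v \<le> K * norm v"
    "\<And>u v. nrm (u + v) \<le> nrm u + nrm v" "\<And>s v. nrm (s *\<^sub>R v) \<le> \<bar>s\<bar> * nrm v"
    "\<And>v. nrm (f v) \<le> nrm v"
proof
  define nrm where "nrm v = (SUP k. norm ((f ^^ k) v))" for v
  have upper: "norm ((f ^^ k) v) \<le> nrm v" for k v
    unfolding nrm_def using bounded by (intro cSUP_upper bdd_aboveI2) auto
  have least: "nrm v \<le> B" if "\<And>k. norm ((f ^^ k) v) \<le> B" for v B
    unfolding nrm_def using that by (intro cSUP_least) auto
  have lin: "linear (f ^^ k)" for k
  proof (induction k)
    case (Suc k)
    show ?case using linear_compose[OF f Suc] by (simp add: funpow_Suc_right o_def del: funpow.simps)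
  qed (simp add: linear_id[unfolded id_def])
  show "norm v \<le> nrm v" for v using upper[of 0 v] by simp
  show "nrm v \<le> K * norm v" for v by (intro least bounded)
  show "nrm (u + v) \<le> nrm u + nrm v" for u v
    by (intro least) (metis linear_add[OF lin] norm_triangle_le add_mono upper)
  show "nrm (s *\<^sub>R v) \<le> \<bar>s\<bar> * nrm v" for s v
    by (intro least) (simp add: linear_scale[OF lin] mult_left_mono upper)
  show "nrm (f v) \<le> nrm v" for v
    by (intro least) (metis funpow_Suc_right comp_apply upper)
qed

section \<open>Hurwitz matrices and the Euler contraction\<close>

lemma of_real_mat_euler_mult_vec:
  "of_real_mat (r *\<^sub>R (mat 1 + t *\<^sub>R A)) *v w
     = of_real r *s (w + of_real t *s (of_real_mat A *v w))"
proof -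
  have "(of_real_mat (r *\<^sub>R (mat 1 + t *\<^sub>R A)) *v w) $ i
      = (\<Sum>j\<in>UNIV. of_real r * ((if i = j then w $ j else 0) + of_real t * (of_real (A $ i $ j) * w $ j)))"
    for i
    unfolding of_real_mat_def matrix_vector_mult_def vec_lambda_beta
    by (intro sum.cong) (auto simp: Finite_Cartesian_Product.mat_def algebra_simps)
  thus ?thesis
    by (simp add: Finite_Cartesian_Product.vec_eq_iff sum.distrib sum_distrib_left[symmetric]
        of_real_mat_def matrix_vector_mult_def distrib_left mult.assoc)
qed

lemma hurwitz_eigenvalue_Re_neg:
  fixes A :: "real^'n^'n"
  assumes "hurwitz A" and w: "w \<noteq> 0" and eig: "of_real_mat A *v w = \<mu> *s w"
  shows "Re \<mu> < 0"
proof (rule ccontr)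
  assume "\<not> Re \<mu> < 0"
  hence "invertible (mat \<mu> - of_real_mat A)"
    using \<open>hurwitz A\<close> unfolding hurwitz_def of_real_mat_def invertible_det_nz by blast
  then obtain B where B: "B ** (mat \<mu> - of_real_mat A) = mat 1"
    using invertible_left_inverse by blast
  have "mat \<mu> *v w = \<mu> *s w"
    by (simp add: Finite_Cartesian_Product.vec_eq_iff matrix_vector_mult_def
        Finite_Cartesian_Product.mat_def if_distrib[of "\<lambda>x. x * _"] cong: if_cong)
  hence "(mat \<mu> - of_real_mat A) *v w = 0"
    using eig by (simp add: matrix_vector_mult_diff_rdistrib)
  hence "w = 0"
    by (metis B matrix_vector_mul_assoc matrix_vector_mul_lid matrix_vector_mult_0_right)
  with w show False by contradiction
qed

lemma euler_factors_in_disc: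
  fixes S :: "complex set"
  assumes "finite S" and neg: "\<And>z. z \<in> S \<Longrightarrow> Re z < 0"
  obtains h \<rho> where "0 < h" "0 < \<rho>" "\<rho> < 1" "\<And>z. z \<in> S \<Longrightarrow> cmod (1 + of_real h * z) < \<rho>"
proof -
  define h where "h = Min (insert 1 ((\<lambda>z. - Re z / (cmod z)\<^sup>2) ` S))"
  have "0 < - Re z / (cmod z)\<^sup>2" if "z \<in> S" for z
    using neg[OF that] by (intro divide_pos_pos) auto
  hence h: "0 < h" using \<open>finite S\<close> by (simp add: h_def)
  have lt1: "cmod (1 + of_real h * z) < 1" if "z \<in> S" for z
  proof -
    have "h \<le> - Re z / (cmod z)\<^sup>2" using \<open>finite S\<close> that by (simp add: h_def)
    moreover have "0 < (cmod z)\<^sup>2" using neg[OF that] by auto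
    ultimately have "h * (cmod z)\<^sup>2 \<le> - Re z" by (metis pos_le_divide_eq)
    hence "h * (h * (cmod z)\<^sup>2) \<le> h * - Re z" using h by (intro mult_left_mono) auto
    moreover have "(cmod (1 + of_real h * z))\<^sup>2 = 1 + 2 * h * Re z + h * (h * (cmod z)\<^sup>2)"
      by (simp only: cmod_power2) (simp add: power2_eq_square algebra_simps)
    moreover have "h * Re z < 0" using neg[OF that] h by (simp add: mult_pos_neg)
    ultimately have "(cmod (1 + of_real h * z))\<^sup>2 < 1" by linarith
    thus ?thesis by (simp add: power_less_one_iff)
  qed
  define m where "m = Max (insert 0 ((\<lambda>z. cmod (1 + of_real h * z)) ` S))"
  have "0 \<le> m" "m < 1" using \<open>finite S\<close> lt1 by (auto simp: m_def)
  moreover have "cmod (1 + of_real h * z) \<le> m" if "z \<in> S" for z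
    using \<open>finite S\<close> that by (simp add: m_def)
  ultimately show ?thesis
    by (intro that[of h "(1 + m) / 2"] h) force+
qed

lemma convex_euler_step_contraction:
  fixes nrm :: "'a::real_vector \<Rightarrow> real" and f :: "'a \<Rightarrow> 'a"
  assumes triangle: "\<And>u v. nrm (u + v) \<le> nrm u + nrm v"
    and scale: "\<And>s v. nrm (s *\<^sub>R v) \<le> \<bar>s\<bar> * nrm v"
    and step: "nrm (v + h *\<^sub>R f v) \<le> \<rho> * nrm v" and "0 < h" "0 \<le> t" "t \<le> h"
  shows "nrm (v + t *\<^sub>R f v) \<le> (1 - (1 - \<rho>) / h * t) * nrm v"
proof -
  have "v + t *\<^sub>R f v = (1 - t / h) *\<^sub>R v + (t / h) *\<^sub>R (v + h *\<^sub>R f v)"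
    using \<open>0 < h\<close> by (simp add: algebra_simps)
  moreover have "0 \<le> 1 - t / h" "0 \<le> t / h" using assms(4-6) by auto
  ultimately have "nrm (v + t *\<^sub>R f v) \<le> (1 - t / h) * nrm v + t / h * nrm (v + h *\<^sub>R f v)"
    using triangle scale[of "1 - t / h" v] scale[of "t / h" "v + h *\<^sub>R f v"] by (smt (verit) abs_of_nonneg)
  also have "\<dots> \<le> (1 - t / h) * nrm v + t / h * (\<rho> * nrm v)"
    using step \<open>0 \<le> t / h\<close> by (intro add_left_mono mult_left_mono)
  finally show ?thesis using \<open>0 < h\<close> by (simp add: field_simps)
qed

locale euler_contraction =
  fixes A :: "real^'n^'n" and nrm :: "real^'n \<Rightarrow> real" and c h K :: real
  assumes c_pos: "0 < c" and h_pos: "0 < h"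
    and norm_le_nrm: "\<And>v. norm v \<le> nrm v"
    and nrm_le_norm: "\<And>v. nrm v \<le> K * norm v"
    and nrm_triangle: "\<And>u v. nrm (u + v) \<le> nrm u + nrm v"
    and nrm_euler_step: "\<And>t v. 0 \<le> t \<Longrightarrow> t \<le> h \<Longrightarrow> nrm (v + t *\<^sub>R (A *v v)) \<le> (1 - c * t) * nrm v"

lemma hurwitz_euler_contraction:
  fixes A :: "real^'n^'n"
  assumes "hurwitz A"
  obtains nrm c h K where "euler_contraction A nrm c h K"
proof -
  define S where "S = {z. \<exists>w. w \<noteq> 0 \<and> of_real_mat A *v w = z *s w}"
  have "finite S" by (simp add: S_def finite_eigenvalues)
  moreover have "\<And>z. z \<in> S \<Longrightarrow> Re z < 0"
    using hurwitz_eigenvalue_Re_neg[OF assms] by (auto simp: S_def)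
  ultimately obtain h \<rho> where h: "0 < h" and \<rho>: "0 < \<rho>" "\<rho> < 1"
    and disc: "\<And>z. z \<in> S \<Longrightarrow> cmod (1 + of_real h * z) < \<rho>"
    using euler_factors_in_disc by blast
  define B where "B = (1 / \<rho>) *\<^sub>R (mat 1 + h *\<^sub>R A)"
  have "cmod \<mu> < 1" if "w \<noteq> 0" and eig: "of_real_mat B *v w = \<mu> *s w" for \<mu> w
  proof -
    have "of_real (1 / \<rho>) *s (w + of_real h *s (of_real_mat A *v w)) = \<mu> *s w"
      using eig by (simp only: B_def of_real_mat_euler_mult_vec)
    hence "of_real_mat A *v w = ((of_real \<rho> * \<mu> - 1) / of_real h) *s w"
      using h \<rho> by (simp add: Finite_Cartesian_Product.vec_eq_iff field_simps)
    hence "(of_real \<rho> * \<mu> - 1) / of_real h \<in> S" using \<open>w \<noteq> 0\<close> by (auto simp: S_def)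
    from disc[OF this] have "cmod (of_real \<rho> * \<mu>) < \<rho>" using h by simp
    thus ?thesis using \<rho> by (simp add: norm_mult)
  qed
  then obtain K where "\<And>k v. norm (((*v) B ^^ k) v) \<le> K * norm v"
    using power_bounded_of_eigenvalues_in_unit_disc by blast
  then obtain nrm where nrm: "\<And>v. norm v \<le> nrm v" "\<And>v. nrm v \<le> K * norm v"
    "\<And>u v. nrm (u + v) \<le> nrm u + nrm v" "\<And>s v. nrm (s *\<^sub>R v) \<le> \<bar>s\<bar> * nrm v"
    "\<And>v. nrm (B *v v) \<le> nrm v"
    using power_bounded_adapted_norm[of "(*v) B"] by (metis matrix_vector_mul_linear)
  have "nrm (v + h *\<^sub>R (A *v v)) \<le> \<rho> * nrm v" for v
  proof -
    have "v + h *\<^sub>R (A *v v) = \<rho> *\<^sub>R (B *v v)"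
      using \<rho> by (simp add: B_def matrix_vector_mult_add_rdistrib scaleR_matrix_vector_assoc[symmetric])
    thus ?thesis using nrm(4)[of \<rho> "B *v v"] nrm(5)[of v] \<rho>
      by (simp add: order_trans[OF _ mult_left_mono])
  qed
  hence "nrm (v + t *\<^sub>R (A *v v)) \<le> (1 - (1 - \<rho>) / h * t) * nrm v" if "0 \<le> t" "t \<le> h" for t v
    using nrm(3,4) h that \<rho> by (intro convex_euler_step_contraction) auto
  moreover have "0 < (1 - \<rho>) / h" using h \<rho> by simp
  ultimately have "euler_contraction A nrm ((1 - \<rho>) / h) h K"
    using h nrm(1-3) by unfold_locales auto
  thus thesis by (rule that)
qed

context euler_contraction
begin

lemma nrm_nonneg: "0 \<le> nrm v"
  by (rule order_trans[OF norm_ge_zero norm_le_nrm])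

lemma one_le_K: "1 \<le> K"
proof -
  have "norm (axis undefined 1 :: real^'n) = 1" by simp
  thus ?thesis using norm_le_nrm nrm_le_norm by (metis mult.right_neutral order_trans)
qed

lemma nrm_perturbed_euler_step:
  assumes t: "0 \<le> t" "t \<le> h" "c * t \<le> 1" and "0 \<le> \<tau>"
    and y': "y' = y + t *\<^sub>R (A *v y) + t *\<^sub>R \<zeta>"
    and \<zeta>: "norm \<zeta> \<le> c / (4 * K) * (nrm y' + \<tau>)"
  shows "nrm y' \<le> (1 - 3/4 * c * t) * nrm y + c/2 * t * \<tau>"
proof -
  have "nrm y' \<le> (1 - c * t) * nrm y + K * (t * norm \<zeta>)"
    using nrm_triangle[of "y + t *\<^sub>R (A *v y)" "t *\<^sub>R \<zeta>"] nrm_euler_step[OF t(1,2), of y]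
      nrm_le_norm[of "t *\<^sub>R \<zeta>"] t(1) by (simp add: y')
  also have "K * (t * norm \<zeta>) \<le> K * (t * (c / (4 * K) * (nrm y' + \<tau>)))"
    using \<zeta> t one_le_K by (intro mult_left_mono) auto
  also have "\<dots> = c/4 * t * (nrm y' + \<tau>)"
    using one_le_K by (simp add: field_simps)
  finally have "(1 - c/4 * t) * nrm y' \<le> (1 - c * t) * nrm y + c/4 * t * \<tau>"
    by (simp add: field_simps)
  also have "\<dots> \<le> (1 - c/4 * t) * ((1 - 3/4 * c * t) * nrm y + c/2 * t * \<tau>)"
  proof -
    have "(1 - c/4 * t) * ((1 - 3/4 * c * t) * nrm y + c/2 * t * \<tau>) - ((1 - c * t) * nrm y + c/4 * t * \<tau>)
        = 3/16 * (c * t)\<^sup>2 * nrm y + c * t * \<tau> * (1/4 - c * t / 8)"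
      by (simp add: power2_eq_square field_simps)
    moreover have "0 \<le> 3/16 * (c * t)\<^sup>2 * nrm y + c * t * \<tau> * (1/4 - c * t / 8)"
      using c_pos t \<open>0 \<le> \<tau>\<close> nrm_nonneg by (intro add_nonneg_nonneg mult_nonneg_nonneg) auto
    ultimately show ?thesis by linarith
  qed
  finally show ?thesis
    using c_pos t by (simp add: mult_le_cancel_left_pos)
qed

lemma nrm_sq_perturbed_euler_step:
  assumes t: "0 < t" "t \<le> h" "c * t \<le> 1" and g: "0 < g" "g / t \<le> 1 + c/4 * t"
    and y': "y' = y + t *\<^sub>R (A *v y) + t *\<^sub>R \<zeta>"
    and \<zeta>: "norm \<zeta> \<le> c / (4 * K) * (nrm y' + \<tau>)"
    and \<tau>: "0 \<le> \<tau>" "\<tau>\<^sup>2 \<le> t * s"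
  shows "(nrm y')\<^sup>2 / t \<le> (1 - c/2 * t) * ((nrm y)\<^sup>2 / g) + t * (c/3 * s)"
proof -
  define \<alpha> where "\<alpha> = 3/4 * c * t"
  have \<alpha>: "0 < \<alpha>" "\<alpha> \<le> 1" using c_pos t by (auto simp: \<alpha>_def)
  have "(nrm y')\<^sup>2 \<le> (1 - \<alpha>) * (nrm y)\<^sup>2 + (c/2 * t * \<tau>)\<^sup>2 / \<alpha>"
    using nrm_perturbed_euler_step[OF less_imp_le[OF t(1)] t(2,3) \<tau>(1) y' \<zeta>] nrm_nonneg \<alpha>
    by (intro power2_le_convex_step) (auto simp: \<alpha>_def)
  also have "(c/2 * t * \<tau>)\<^sup>2 / \<alpha> = t * (c/3 * \<tau>\<^sup>2)"
    using c_pos t by (simp add: \<alpha>_def power2_eq_square field_simps)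
  also have "\<dots> \<le> t * (c/3 * (t * s))"
    using c_pos t \<tau>(2) by (intro mult_left_mono) auto
  finally have "(nrm y')\<^sup>2 / t \<le> ((1 - \<alpha>) * (nrm y)\<^sup>2 + t * (c/3 * (t * s))) / t"
    using t by (intro divide_right_mono) auto
  also have "\<dots> = (1 - \<alpha>) * (g / t) * ((nrm y)\<^sup>2 / g) + t * (c/3 * s)"
    using t g by (simp add: field_simps)
  also have "(1 - \<alpha>) * (g / t) \<le> 1 - c/2 * t"
  proof -
    have "(1 - \<alpha>) * (g / t) \<le> (1 - \<alpha>) * (1 + c/4 * t)"
      using g \<alpha> by (intro mult_left_mono) auto
    also have "\<dots> \<le> 1 - c/2 * t"
      using c_pos t by (simp add: \<alpha>_def algebra_simps)
    finally show ?thesis .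
  qed
  hence "(1 - \<alpha>) * (g / t) * ((nrm y)\<^sup>2 / g) \<le> (1 - c/2 * t) * ((nrm y)\<^sup>2 / g)"
    using g by (intro mult_right_mono) auto
  finally show ?thesis by simp
qed

end

section \<open>Products of Euler factors\<close>

fun accumulated_noise :: "(nat \<Rightarrow> real^'n^'n) \<Rightarrow> (nat \<Rightarrow> real^'n) \<Rightarrow> nat \<Rightarrow> real^'n" where
  "accumulated_noise F z 0 = 0"
| "accumulated_noise F z (Suc n) = F (Suc n) *v accumulated_noise F z n + z (Suc n)"

lemma foldr_matrix_mult_right:
  "foldr (\<lambda>j P. F j ** P) js Q = foldr (\<lambda>j P. F j ** P) js (mat 1) ** (Q :: 'a::semiring_1^'n^'n)"
  by (induction js) (simp_all add: matrix_mul_assoc)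

lemma mat_prod_range_Suc:
  assumes "m \<le> Suc n"
  shows "mat_prod_range F m (Suc n) = mat_prod_range F m n ** F (Suc n)"
proof -
  have "[m..<Suc (Suc n)] = [m..<Suc n] @ [Suc n]" using assms by simp
  thus ?thesis by (simp add: mat_prod_range_def foldr_matrix_mult_right[of F _ "F (Suc n)"])
qed

lemma mat_prod_range_commute:
  assumes "\<And>j. F j ** Q = Q ** F j"
  shows "mat_prod_range F m n ** Q = Q ** mat_prod_range F m n"
proof -
  have "foldr (\<lambda>j P. F j ** P) js (mat 1) ** Q = Q ** foldr (\<lambda>j P. F j ** P) js (mat 1)" for js
    by (induction js) (simp_all, metis assms matrix_mul_assoc)
  thus ?thesis by (simp add: mat_prod_range_def)
qed

lemma sum_mat_prod_range_eq_accumulated_noise: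
  assumes comm: "\<And>i j. F i ** F j = F j ** F i"
  shows "(\<Sum>k=1..n. mat_prod_range F (Suc k) (Suc n) *v z k) = F (Suc n) *v accumulated_noise F z n"
proof (induction n)
  case (Suc n)
  let ?G = "F (Suc (Suc n))"
  have "mat_prod_range F (Suc k) (Suc (Suc n)) = ?G ** mat_prod_range F (Suc k) (Suc n)"
    if "k \<le> n" for k
    using that mat_prod_range_Suc[of "Suc k" "Suc n" F] mat_prod_range_commute[OF comm] by simp
  hence "(\<Sum>k=1..Suc n. mat_prod_range F (Suc k) (Suc (Suc n)) *v z k)
      = (\<Sum>k=1..n. ?G *v (mat_prod_range F (Suc k) (Suc n) *v z k)) + ?G *v z (Suc n)"
    by (simp add: mat_prod_range_def matrix_vector_mul_assoc[symmetric])
  also have "\<dots> = ?G *v (\<Sum>k=1..n. mat_prod_range F (Suc k) (Suc n) *v z k) + ?G *v z (Suc n)"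
    by (simp add: linear_sum[OF matrix_vector_mul_linear])
  finally show ?case by (simp only: Suc.IH accumulated_noise.simps matrix_vector_right_distrib)
qed simp

lemma euler_factors_commute:
  fixes A :: "real^'n^'n"
  shows "(mat 1 + a *\<^sub>R A) ** (mat 1 + b *\<^sub>R A) = (mat 1 + b *\<^sub>R A) ** (mat 1 + a *\<^sub>R A)"
  by (simp add: matrix_eq matrix_vector_mul_assoc[symmetric] scaleR_matrix_vector_assoc[symmetric]
      algebra_simps)

lemma norm_le_twice_euler_step:
  fixes A :: "real^'n^'n"
  assumes "0 \<le> t" "t * onorm ((*v) A) \<le> 1/2"
  shows "norm u \<le> 2 * norm ((mat 1 + t *\<^sub>R A) *v u)"
proof -
  have "u = (mat 1 + t *\<^sub>R A) *v u - t *\<^sub>R (A *v u)"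
    by (simp add: matrix_vector_mult_add_rdistrib scaleR_matrix_vector_assoc[symmetric])
  hence "norm u \<le> norm ((mat 1 + t *\<^sub>R A) *v u) + t * norm (A *v u)"
    using norm_triangle_ineq4 assms(1) by (metis abs_of_nonneg norm_scaleR)
  also have "t * norm (A *v u) \<le> t * onorm ((*v) A) * norm u"
    using assms(1) onorm[OF matrix_vector_mul_bounded_linear, of A u]
    by (simp add: mult_left_mono mult.assoc)
  also have "\<dots> \<le> 1/2 * norm u"
    using assms(2) by (intro mult_right_mono) auto
  finally show ?thesis by simp
qed

lemma euler_accumulated_noise_bound:
  fixes A :: "real^'n^'n" and \<gamma> w :: "nat \<Rightarrow> real" and \<zeta> v :: "nat \<Rightarrow> real^'n"
  defines "T \<equiv> accumulated_noise (\<lambda>j. mat 1 + \<gamma> j *\<^sub>R A) (\<lambda>k. \<gamma> k *\<^sub>R \<zeta> k)"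
  assumes \<gamma>0: "\<gamma> \<longlonglongrightarrow> 0" and \<gamma>pos: "\<forall>\<^sub>F n in sequentially. 0 \<le> \<gamma> n"
    and noise: "\<forall>\<^sub>F n in sequentially.
      (\<Sum>k=1..n. \<gamma> k *\<^sub>R (mat_prod_range (\<lambda>j. mat 1 + \<gamma> j *\<^sub>R A) (Suc k) (Suc n) *v \<zeta> k))
        = (sqrt (\<gamma> n) * w n) *\<^sub>R v n"
    and w: "\<And>n. \<bar>w n\<bar> \<le> B"
  shows "\<forall>\<^sub>F n in sequentially. (norm (T n))\<^sup>2 \<le> \<gamma> n * (4 * B\<^sup>2 * (norm (v n))\<^sup>2)"
proof -
  have sum: "(\<Sum>k=1..n. \<gamma> k *\<^sub>R (mat_prod_range (\<lambda>j. mat 1 + \<gamma> j *\<^sub>R A) (Suc k) (Suc n) *v \<zeta> k))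
      = (mat 1 + \<gamma> (Suc n) *\<^sub>R A) *v T n" for n
    using sum_mat_prod_range_eq_accumulated_noise[OF euler_factors_commute, of \<gamma> A n "\<lambda>k. \<gamma> k *\<^sub>R \<zeta> k"]
    by (simp add: T_def matrix_vector_mult_scaleR)
  have "(\<lambda>n. \<gamma> n * onorm ((*v) A)) \<longlonglongrightarrow> 0"
    by (rule tendsto_mult_left_zero[OF \<gamma>0])
  hence "\<forall>\<^sub>F n in sequentially. \<gamma> n * onorm ((*v) A) < 1/2"
    by (rule order_tendstoD(2)) simp
  hence "\<forall>\<^sub>F n in sequentially. \<gamma> n * onorm ((*v) A) \<le> 1/2"
    by (rule eventually_mono) simp
  with \<gamma>pos have "\<forall>\<^sub>F n in sequentially. 0 \<le> \<gamma> n \<and> \<gamma> n * onorm ((*v) A) \<le> 1/2"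
    by (rule eventually_conj)
  hence "\<forall>\<^sub>F n in sequentially. 0 \<le> \<gamma> (Suc n) \<and> \<gamma> (Suc n) * onorm ((*v) A) \<le> 1/2"
    by (rule eventually_sequentially_Suc[THEN iffD2])
  with \<gamma>pos noise show ?thesis
  proof eventually_elim
    case (elim n)
    have "norm (T n) \<le> 2 * norm ((sqrt (\<gamma> n) * w n) *\<^sub>R v n)"
      using norm_le_twice_euler_step[of "\<gamma> (Suc n)" A "T n"] elim sum[of n] by simp
    also have "\<dots> = 2 * (sqrt (\<gamma> n) * \<bar>w n\<bar> * norm (v n))"
      using elim(1) by (simp add: abs_mult)
    also have "\<dots> \<le> 2 * (sqrt (\<gamma> n) * B * norm (v n))"
      using w[of n] elim(1) by (intro mult_left_mono mult_right_mono) auto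
    finally have "(norm (T n))\<^sup>2 \<le> (2 * (sqrt (\<gamma> n) * B * norm (v n)))\<^sup>2"
      by (intro power_mono) auto
    thus ?case using elim(1) by (simp add: power_mult_distrib)
  qed
qed

section \<open>Running averages and stochastic boundedness\<close>

text \<open>The recursion is switched on only from step N on, where the damping factors lie in [0, 1].\<close>
fun running_average :: "nat \<Rightarrow> real \<Rightarrow> (nat \<Rightarrow> real) \<Rightarrow> (nat \<Rightarrow> real) \<Rightarrow> nat \<Rightarrow> real" where
  "running_average N b g u 0 = 0"
| "running_average N b g u (Suc n) =
    (if n < N then 0 else (1 - b * g (Suc n)) * running_average N b g u n + g (Suc n) * u (Suc n))"

lemma running_average_nonneg:
  assumes "\<And>m. N \<le> m \<Longrightarrow> 0 \<le> 1 - b * g (Suc m) \<and> 0 \<le> g (Suc m)" and "\<And>m. 0 \<le> u m"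
  shows "0 \<le> running_average N b g u n"
  by (induction n) (use assms in \<open>auto intro!: add_nonneg_nonneg mult_nonneg_nonneg\<close>)

lemma running_average_measurable [measurable]:
  assumes [measurable]: "\<And>m. u m \<in> borel_measurable M"
  shows "(\<lambda>\<omega>. running_average N b g (\<lambda>m. u m \<omega>) n) \<in> borel_measurable M"
  by (induction n) simp_all

lemma running_average_integral:
  assumes int: "\<And>m. integrable M (u m)" and bound: "\<And>m. integral\<^sup>L M (u m) \<le> C"
    and "0 \<le> C" "0 < b" and g: "\<And>m. N \<le> m \<Longrightarrow> 0 \<le> 1 - b * g (Suc m) \<and> 0 \<le> g (Suc m)"
  shows "integrable M (\<lambda>\<omega>. running_average N b g (\<lambda>m. u m \<omega>) n)
    \<and> integral\<^sup>L M (\<lambda>\<omega>. running_average N b g (\<lambda>m. u m \<omega>) n) \<le> C / b"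
proof (induction n)
  case 0
  show ?case using assms by simp
next
  case (Suc n)
  show ?case
  proof (cases "n < N")
    case False
    let ?R = "\<lambda>\<omega>. running_average N b g (\<lambda>m. u m \<omega>) n"
    have "(1 - b * g (Suc n)) * integral\<^sup>L M ?R + g (Suc n) * integral\<^sup>L M (u (Suc n))
        \<le> (1 - b * g (Suc n)) * (C / b) + g (Suc n) * C"
      using Suc g[of n] bound[of "Suc n"] False by (intro add_mono mult_left_mono) auto
    also have "\<dots> = C / b" using \<open>0 < b\<close> by (simp add: field_simps)
    finally show ?thesis using False Suc int by simp
  qed (use assms in simp)
qed

lemma O_Lp_2_imp_integrable_power2:
  assumes "O_Lp M 2 W"
  obtains C where "0 \<le> C" "\<And>n. integrable M (\<lambda>\<omega>. (norm (W n \<omega>))\<^sup>2)"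
    "\<And>n. (\<integral>\<omega>. (norm (W n \<omega>))\<^sup>2 \<partial>M) \<le> C"
proof -
  obtain C where meas: "\<And>n. W n \<in> borel_measurable M"
    and C: "\<And>n. (\<integral>\<^sup>+ \<omega>. ennreal ((norm (W n \<omega>))\<^sup>2) \<partial>M) \<le> ennreal C"
    using assms by (auto simp: O_Lp_def)
  have int: "integrable M (\<lambda>\<omega>. (norm (W n \<omega>))\<^sup>2)" for n
    using C[of n] meas[of n] by (intro integrableI_nonneg) (auto simp: top.not_eq_extremum intro: le_less_trans)
  have "ennreal (\<integral>\<omega>. (norm (W n \<omega>))\<^sup>2 \<partial>M) \<le> ennreal (max C 0)" for n
    using C[of n] nn_integral_eq_integral[OF int] by (simp add: ennreal_max_0)
  hence "(\<integral>\<omega>. (norm (W n \<omega>))\<^sup>2 \<partial>M) \<le> max C 0" for n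
    by (metis ennreal_le_iff max.cobounded2)
  with int show thesis by (intro that[of "max C 0"]) auto
qed

lemma O_Lp_1_of_integral_bounded:
  fixes Z :: "nat \<Rightarrow> 'a \<Rightarrow> real"
  assumes int: "\<And>n. integrable M (Z n)" and nonneg: "\<And>n \<omega>. 0 \<le> Z n \<omega>"
    and bound: "\<And>n. integral\<^sup>L M (Z n) \<le> C"
  shows "O_Lp M 1 Z"
  unfolding O_Lp_def
proof (intro conjI allI exI)
  fix n
  show "Z n \<in> borel_measurable M" using int by blast
  have "(\<integral>\<^sup>+ \<omega>. ennreal (norm (Z n \<omega>) powr 1) \<partial>M) = (\<integral>\<^sup>+ \<omega>. ennreal (Z n \<omega>) \<partial>M)"
    using nonneg by simp
  also have "\<dots> = ennreal (integral\<^sup>L M (Z n))"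
    using int nonneg by (intro nn_integral_eq_integral) auto
  also have "\<dots> \<le> ennreal C" using bound by (rule ennreal_leI)
  finally show "(\<integral>\<^sup>+ \<omega>. ennreal (norm (Z n \<omega>) powr 1) \<partial>M) \<le> ennreal C" .
qed

lemma O_wp1_divide:
  fixes f Z :: "nat \<Rightarrow> 'a \<Rightarrow> real"
  assumes "\<And>n. f n \<in> borel_measurable M" "\<And>n. Z n \<in> borel_measurable M"
    and Z: "\<And>n \<omega>. 1 \<le> Z n \<omega>" and bound: "AE \<omega> in M. \<exists>C. \<forall>n. \<bar>f n \<omega>\<bar> \<le> C * Z n \<omega>"
  shows "O_wp1 M (\<lambda>n \<omega>. f n \<omega> / Z n \<omega>)"
  unfolding O_wp1_def
proof (intro conjI allI)
  show "(\<lambda>\<omega>. f n \<omega> / Z n \<omega>) \<in> borel_measurable M" for n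
    using assms(1,2) by measurable
  show "AE \<omega> in M. \<exists>B. \<forall>n. \<bar>f n \<omega> / Z n \<omega>\<bar> \<le> B"
    using bound
  proof eventually_elim
    case (elim \<omega>)
    then obtain C where "\<And>n. \<bar>f n \<omega>\<bar> \<le> C * Z n \<omega>" by blast
    hence "\<bar>f n \<omega> / Z n \<omega>\<bar> \<le> C" for n
      using Z[of n \<omega>] by (intro abs_divide_le_of_le_mult) auto
    thus ?case by blast
  qed
qed

lemma (in prob_space) running_average_O_Lp:
  assumes "O_Lp M 2 W" and "0 < b" and "\<And>m. N \<le> m \<Longrightarrow> 0 \<le> 1 - b * g (Suc m) \<and> 0 \<le> g (Suc m)"
  shows "O_Lp M 1 (\<lambda>n \<omega>. 1 + running_average N b g (\<lambda>m. (norm (W m \<omega>))\<^sup>2) n + (norm (W n \<omega>))\<^sup>2)"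
proof -
  obtain C where C: "0 \<le> C" "\<And>n. integrable M (\<lambda>\<omega>. (norm (W n \<omega>))\<^sup>2)"
    "\<And>n. (\<integral>\<omega>. (norm (W n \<omega>))\<^sup>2 \<partial>M) \<le> C"
    using O_Lp_2_imp_integrable_power2[OF assms(1)] by blast
  note R = running_average_integral[where u = "\<lambda>m \<omega>. (norm (W m \<omega>))\<^sup>2" and C = C and b = b
      and N = N and g = g, OF C(2,3,1) assms(2,3)]
  show ?thesis
  proof (rule O_Lp_1_of_integral_bounded[where C = "1 + C / b + C"])
    fix n
    show "integrable M (\<lambda>\<omega>. 1 + running_average N b g (\<lambda>m. (norm (W m \<omega>))\<^sup>2) n + (norm (W n \<omega>))\<^sup>2)"
      using R C(2) by auto
    show "(\<integral>\<omega>. 1 + running_average N b g (\<lambda>m. (norm (W m \<omega>))\<^sup>2) n + (norm (W n \<omega>))\<^sup>2 \<partial>M)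
        \<le> 1 + C / b + C"
      using R[of n] C(2,3)[of n] by (simp add: prob_space)
  next
    show "0 \<le> 1 + running_average N b g (\<lambda>m. (norm (W m \<omega>))\<^sup>2) n + (norm (W n \<omega>))\<^sup>2" for n \<omega>
      using running_average_nonneg[where N = N and b = b and g = g, OF assms(3)]
      by (simp add: add_nonneg_nonneg)
  qed
qed

section \<open>Trajectory estimates\<close>

context euler_contraction
begin

lemma perturbed_trajectory_recursion:
  fixes y T \<zeta> :: "nat \<Rightarrow> real^'n" and \<gamma> u :: "nat \<Rightarrow> real"
  assumes \<gamma>0: "\<gamma> \<longlonglongrightarrow> 0" and \<gamma>pos: "\<forall>\<^sub>F n in sequentially. 0 < \<gamma> n"
    and ratio: "\<forall>\<^sub>F n in sequentially. \<gamma> n / \<gamma> (Suc n) \<le> 1 + c/4 * \<gamma> (Suc n)"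
    and y: "\<And>n. y (Suc n) = y n + \<gamma> (Suc n) *\<^sub>R (A *v y n) + \<gamma> (Suc n) *\<^sub>R \<zeta> (Suc n)"
    and \<zeta>: "\<forall>\<^sub>F n in sequentially. norm (\<zeta> (Suc n)) \<le> c / (4 * K) * norm (y (Suc n) + T (Suc n))"
    and T: "\<forall>\<^sub>F n in sequentially. (norm (T n))\<^sup>2 \<le> \<gamma> n * u n"
  shows "\<forall>\<^sub>F n in sequentially. (nrm (y (Suc n)))\<^sup>2 / \<gamma> (Suc n)
    \<le> (1 - c/2 * \<gamma> (Suc n)) * ((nrm (y n))\<^sup>2 / \<gamma> n) + \<gamma> (Suc n) * (c/3 * u (Suc n))"
proof -
  have "\<forall>\<^sub>F n in sequentially. \<gamma> n < min h (1 / c)"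
    using \<gamma>0 h_pos c_pos by (intro order_tendstoD(2)) auto
  hence "\<forall>\<^sub>F n in sequentially. \<gamma> n \<le> h \<and> c * \<gamma> n \<le> 1"
    by (rule eventually_mono) (use c_pos in \<open>auto simp: field_simps\<close>)
  with \<gamma>pos T have "\<forall>\<^sub>F n in sequentially. 0 < \<gamma> n \<and> \<gamma> n \<le> h \<and> c * \<gamma> n \<le> 1
      \<and> (norm (T n))\<^sup>2 \<le> \<gamma> n * u n"
    by eventually_elim auto
  hence "\<forall>\<^sub>F n in sequentially. 0 < \<gamma> (Suc n) \<and> \<gamma> (Suc n) \<le> h \<and> c * \<gamma> (Suc n) \<le> 1
      \<and> (norm (T (Suc n)))\<^sup>2 \<le> \<gamma> (Suc n) * u (Suc n)"
    by (rule eventually_sequentially_Suc[THEN iffD2])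
  with \<gamma>pos ratio \<zeta> show ?thesis
  proof eventually_elim
    case (elim n)
    have "norm (y (Suc n) + T (Suc n)) \<le> nrm (y (Suc n)) + norm (T (Suc n))"
      using norm_triangle_ineq norm_le_nrm by (rule order_trans[OF _ add_right_mono])
    hence "c / (4 * K) * norm (y (Suc n) + T (Suc n)) \<le> c / (4 * K) * (nrm (y (Suc n)) + norm (T (Suc n)))"
      using c_pos one_le_K by (intro mult_left_mono) auto
    hence "norm (\<zeta> (Suc n)) \<le> c / (4 * K) * (nrm (y (Suc n)) + norm (T (Suc n)))"
      using elim(3) by linarith
    thus ?case
      using elim by (intro nrm_sq_perturbed_euler_step[OF _ _ _ _ _ y]) auto
  qed
qed

lemma power2_norm_add_div_le:
  assumes "0 < g" and "(norm t)\<^sup>2 \<le> g * s"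
  shows "(norm (y + t))\<^sup>2 / g \<le> 2 * ((nrm y)\<^sup>2 / g) + 2 * s"
proof -
  have "norm (y + t) \<le> nrm y + norm t"
    using norm_triangle_ineq norm_le_nrm by (rule order_trans[OF _ add_right_mono])
  hence "(norm (y + t))\<^sup>2 \<le> (nrm y + norm t)\<^sup>2"
    by (intro power_mono) auto
  also have "\<dots> \<le> 2 * (nrm y)\<^sup>2 + 2 * (norm t)\<^sup>2"
    by (rule power2_sum_le)
  also have "\<dots> \<le> 2 * (nrm y)\<^sup>2 + 2 * (g * s)"
    using assms(2) by simp
  finally show ?thesis
    using assms(1) by (simp add: field_simps)
qed

lemma perturbed_trajectory_bound:
  fixes y T \<zeta> :: "nat \<Rightarrow> real^'n" and \<gamma> R u :: "nat \<Rightarrow> real"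
  assumes \<gamma>0: "\<gamma> \<longlonglongrightarrow> 0" and \<gamma>pos: "\<forall>\<^sub>F n in sequentially. 0 < \<gamma> n"
    and ratio: "\<forall>\<^sub>F n in sequentially. \<gamma> n / \<gamma> (Suc n) \<le> 1 + c/4 * \<gamma> (Suc n)"
    and y: "\<And>n. y (Suc n) = y n + \<gamma> (Suc n) *\<^sub>R (A *v y n) + \<gamma> (Suc n) *\<^sub>R \<zeta> (Suc n)"
    and \<zeta>: "\<forall>\<^sub>F n in sequentially. norm (\<zeta> (Suc n)) \<le> c / (4 * K) * norm (y (Suc n) + T (Suc n))"
    and T: "\<forall>\<^sub>F n in sequentially. (norm (T n))\<^sup>2 \<le> \<gamma> n * (\<kappa> * u n)"
    and R: "\<forall>\<^sub>F n in sequentially. R (Suc n) = (1 - c/2 * \<gamma> (Suc n)) * R n + \<gamma> (Suc n) * u (Suc n)"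
    and "0 \<le> \<kappa>" and R0: "\<And>n. 0 \<le> R n" and u0: "\<And>n. 0 \<le> u n"
  shows "\<exists>C. \<forall>\<^sub>F n in sequentially. (norm (y n + T n))\<^sup>2 / \<gamma> n \<le> C * (1 + R n + u n)"
proof -
  define q where "q n = (nrm (y n))\<^sup>2 / \<gamma> n" for n
  define a where "a n = 1 - c/2 * \<gamma> (Suc n)" for n
  define L where "L = c/3 * \<kappa>"
  have "\<forall>\<^sub>F n in sequentially. 0 \<le> \<gamma> n \<and> c/2 * \<gamma> n \<le> 1"
    using eventually_nonneg_mult_le_1[OF \<gamma>0 eventually_mono[OF \<gamma>pos less_imp_le], of "c/2"] c_pos
    by simp
  hence "\<forall>\<^sub>F n in sequentially. 0 \<le> 1 - c/2 * \<gamma> n \<and> 1 - c/2 * \<gamma> n \<le> 1"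
    by eventually_elim (use c_pos in auto)
  hence "\<forall>\<^sub>F n in sequentially. 0 \<le> a n \<and> a n \<le> 1"
    unfolding a_def by (rule eventually_sequentially_Suc[THEN iffD2])
  moreover have "\<forall>\<^sub>F n in sequentially. q (Suc n) \<le> a n * q n + \<gamma> (Suc n) * (L * u (Suc n))"
    using perturbed_trajectory_recursion[OF \<gamma>0 \<gamma>pos ratio y \<zeta>, of "\<lambda>n. \<kappa> * u n"] T
    by (simp add: q_def a_def L_def mult.assoc)
  moreover note \<gamma>pos T R
  ultimately have "\<forall>\<^sub>F n in sequentially. 0 \<le> a n \<and> a n \<le> 1
      \<and> q (Suc n) \<le> a n * q n + \<gamma> (Suc n) * (L * u (Suc n))
      \<and> 0 < \<gamma> n \<and> (norm (T n))\<^sup>2 \<le> \<gamma> n * (\<kappa> * u n) \<and> R (Suc n) = a n * R n + \<gamma> (Suc n) * u (Suc n)"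
    by eventually_elim (simp add: a_def)
  then obtain N where N: "\<And>n. N \<le> n \<Longrightarrow> 0 \<le> a n \<and> a n \<le> 1
      \<and> q (Suc n) \<le> a n * q n + \<gamma> (Suc n) * (L * u (Suc n))
      \<and> 0 < \<gamma> n \<and> (norm (T n))\<^sup>2 \<le> \<gamma> n * (\<kappa> * u n) \<and> R (Suc n) = a n * R n + \<gamma> (Suc n) * u (Suc n)"
    unfolding eventually_sequentially by blast
  define P where "P = max (q N - L * R N) 0"
  have qR: "q n \<le> L * R n + P" if "N \<le> n" for n
    unfolding P_def using N that
    by (intro recursive_inequality_comparison[where a = a and b = "\<lambda>n. \<gamma> (Suc n) * (L * u (Suc n))"])
      (auto simp: algebra_simps)
  have "(norm (y n + T n))\<^sup>2 / \<gamma> n \<le> (2 * L + 2 * P + 2 * \<kappa>) * (1 + R n + u n)" if "N \<le> n" for n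
  proof -
    have "(norm (y n + T n))\<^sup>2 / \<gamma> n \<le> 2 * q n + 2 * (\<kappa> * u n)"
      unfolding q_def using N[OF that] by (intro power2_norm_add_div_le) auto
    also have "\<dots> \<le> 2 * (L * R n + P) + 2 * \<kappa> * u n"
      using qR[OF that] by simp
    also have "\<dots> \<le> (2 * L + 2 * P + 2 * \<kappa>) * (1 + R n + u n)"
    proof -
      have "0 \<le> L" "0 \<le> P" using c_pos \<open>0 \<le> \<kappa>\<close> by (simp_all add: L_def P_def)
      hence "0 \<le> 2 * L * (1 + u n) + 2 * P * (R n + u n) + 2 * \<kappa> * (1 + R n)"
        using R0[of n] u0[of n] \<open>0 \<le> \<kappa>\<close> by (intro add_nonneg_nonneg mult_nonneg_nonneg) auto
      thus ?thesis by (simp add: algebra_simps)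
    qed
    finally show ?thesis .
  qed
  thus ?thesis unfolding eventually_sequentially by blast
qed

lemma trajectory_bound:
  fixes x \<zeta> \<xi> v :: "nat \<Rightarrow> real^'n" and \<gamma> w R :: "nat \<Rightarrow> real"
  assumes \<gamma>0: "\<gamma> \<longlonglongrightarrow> 0" and \<gamma>pos: "\<forall>\<^sub>F n in sequentially. 0 < \<gamma> n"
    and ratio: "\<forall>\<^sub>F n in sequentially. \<gamma> n / \<gamma> (Suc n) \<le> 1 + c/4 * \<gamma> (Suc n)"
    and rec: "\<And>n. x (Suc n) = x n + \<gamma> (Suc n) *\<^sub>R (A *v x n) + \<gamma> (Suc n) *\<^sub>R \<zeta> (Suc n)
      + \<gamma> (Suc n) *\<^sub>R \<xi> (Suc n)"
    and x0: "x \<longlonglongrightarrow> 0"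
    and noise1: "\<forall>\<^sub>F n in sequentially.
      (\<Sum>k=1..n. \<gamma> k *\<^sub>R (mat_prod_range (\<lambda>j. mat 1 + \<gamma> j *\<^sub>R A) (Suc k) (Suc n) *v \<zeta> k))
        = (sqrt (\<gamma> n) * w n) *\<^sub>R v n"
    and w: "\<And>n. \<bar>w n\<bar> \<le> B"
    and noise2: "\<forall>\<^sub>F n in sequentially. norm (\<xi> n) \<le> B' * (norm (x n))\<^sup>2"
    and R: "\<forall>\<^sub>F n in sequentially.
      R (Suc n) = (1 - c/2 * \<gamma> (Suc n)) * R n + \<gamma> (Suc n) * (norm (v (Suc n)))\<^sup>2"
    and R0: "\<And>n. 0 \<le> R n"
  shows "\<exists>C. \<forall>\<^sub>F n in sequentially. (norm (x n))\<^sup>2 / \<gamma> n \<le> C * (1 + R n + (norm (v n))\<^sup>2)"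
proof -
  define T where "T = accumulated_noise (\<lambda>j. mat 1 + \<gamma> j *\<^sub>R A) (\<lambda>k. \<gamma> k *\<^sub>R \<zeta> k)"
  have T: "\<forall>\<^sub>F n in sequentially. (norm (T n))\<^sup>2 \<le> \<gamma> n * (4 * B\<^sup>2 * (norm (v n))\<^sup>2)"
    unfolding T_def using \<gamma>0 eventually_mono[OF \<gamma>pos less_imp_le] noise1 w
    by (rule euler_accumulated_noise_bound)
  have y: "x (Suc n) - T (Suc n)
      = (x n - T n) + \<gamma> (Suc n) *\<^sub>R (A *v (x n - T n)) + \<gamma> (Suc n) *\<^sub>R \<xi> (Suc n)" for n
    by (simp add: T_def rec matrix_vector_mult_add_rdistrib scaleR_matrix_vector_assoc[symmetric]
        algebra_simps)
  have "(\<lambda>n. \<bar>B'\<bar> * norm (x n)) \<longlonglongrightarrow> \<bar>B'\<bar> * 0"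
    by (intro tendsto_mult tendsto_const tendsto_norm_zero x0)
  hence "\<forall>\<^sub>F n in sequentially. \<bar>B'\<bar> * norm (x n) < c / (4 * K)"
    using c_pos one_le_K by (intro order_tendstoD(2)) auto
  with noise2 have "\<forall>\<^sub>F n in sequentially. norm (\<xi> n) \<le> c / (4 * K) * norm (x n)"
  proof eventually_elim
    case (elim n)
    have "B' * (norm (x n))\<^sup>2 \<le> \<bar>B'\<bar> * (norm (x n))\<^sup>2"
      by (intro mult_right_mono) auto
    also have "\<dots> = (\<bar>B'\<bar> * norm (x n)) * norm (x n)"
      by (simp add: power2_eq_square)
    also have "\<dots> \<le> c / (4 * K) * norm (x n)"
      using elim(2) by (intro mult_right_mono) auto
    finally show ?case using elim(1) by linarith
  qed
  hence "\<forall>\<^sub>F n in sequentially. norm (\<xi> (Suc n)) \<le> c / (4 * K) * norm (x (Suc n))"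
    by (rule eventually_sequentially_Suc[THEN iffD2])
  hence "\<forall>\<^sub>F n in sequentially.
      norm (\<xi> (Suc n)) \<le> c / (4 * K) * norm ((x (Suc n) - T (Suc n)) + T (Suc n))"
    by simp
  from perturbed_trajectory_bound[OF \<gamma>0 \<gamma>pos ratio y this T R _ R0]
  show ?thesis by simp
qed

lemma convergent_trajectory_bound:
  fixes x \<zeta> \<xi> v :: "nat \<Rightarrow> real^'n" and \<gamma> w w' :: "nat \<Rightarrow> real"
  assumes \<gamma>pos: "\<forall>n\<ge>1. 0 < \<gamma> n" and \<gamma>sq: "summable (\<lambda>k. (\<gamma> k)\<^sup>2)"
    and \<gamma>log: "(\<lambda>k. ln (\<gamma> k / \<gamma> (Suc k))) \<in> o(\<lambda>k. \<gamma> (Suc k))"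
    and N: "\<And>m. N \<le> m \<Longrightarrow> 0 \<le> 1 - c/2 * \<gamma> (Suc m) \<and> 0 \<le> \<gamma> (Suc m)"
    and rec: "\<And>n. x (Suc n) = x n + \<gamma> (Suc n) *\<^sub>R (A *v x n) + \<gamma> (Suc n) *\<^sub>R \<zeta> (Suc n)
      + \<gamma> (Suc n) *\<^sub>R \<xi> (Suc n)"
    and x0: "x \<longlonglongrightarrow> 0"
    and noise1: "\<forall>n\<ge>1. (\<Sum>k=1..n. \<gamma> k *\<^sub>R (mat_prod_range (\<lambda>j. mat 1 + \<gamma> j *\<^sub>R A) (Suc k) (Suc n) *v \<zeta> k))
        = (sqrt (\<gamma> n) * w n) *\<^sub>R v n"
    and w: "\<And>n. \<bar>w n\<bar> \<le> B"
    and noise2: "\<forall>n\<ge>1. norm (\<xi> n) = (norm (x n))\<^sup>2 * w' n" and w': "\<And>n. \<bar>w' n\<bar> \<le> B'"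
  shows "\<exists>C. \<forall>n. \<bar>(norm (x n))\<^sup>2 / \<gamma> n\<bar>
    \<le> C * (1 + running_average N (c/2) \<gamma> (\<lambda>m. (norm (v m))\<^sup>2) n + (norm (v n))\<^sup>2)"
proof -
  let ?R = "running_average N (c/2) \<gamma> (\<lambda>m. (norm (v m))\<^sup>2)"
  have \<gamma>0: "\<gamma> \<longlonglongrightarrow> 0" by (rule summable_power2_LIMSEQ_zero[OF \<gamma>sq])
  have \<gamma>pos': "\<forall>\<^sub>F n in sequentially. 0 < \<gamma> n"
    using eventually_ge_at_top[of 1] by (rule eventually_mono) (use \<gamma>pos in auto)
  have "\<exists>C. \<forall>\<^sub>F n in sequentially. (norm (x n))\<^sup>2 / \<gamma> n \<le> C * (1 + ?R n + (norm (v n))\<^sup>2)"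
  proof (rule trajectory_bound[OF \<gamma>0 \<gamma>pos' _ rec x0 _ w])
    show "\<forall>\<^sub>F n in sequentially. \<gamma> n / \<gamma> (Suc n) \<le> 1 + c/4 * \<gamma> (Suc n)"
      using \<gamma>log \<gamma>0 \<gamma>pos' c_pos by (intro eventually_ratio_le) auto
    show "\<forall>\<^sub>F n in sequentially. norm (\<xi> n) \<le> B' * (norm (x n))\<^sup>2"
      using eventually_ge_at_top[of 1]
    proof (rule eventually_mono)
      fix n :: nat assume "1 \<le> n"
      hence "norm (\<xi> n) \<le> (norm (x n))\<^sup>2 * B'"
        using noise2 w'[of n] by (auto intro: mult_left_mono)
      thus "norm (\<xi> n) \<le> B' * (norm (x n))\<^sup>2" by (simp add: mult.commute)
    qed
    show "\<forall>\<^sub>F n in sequentially. ?R (Suc n) = (1 - c/2 * \<gamma> (Suc n)) * ?R n + \<gamma> (Suc n) * (norm (v (Suc n)))\<^sup>2"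
      using eventually_ge_at_top[of N] by (rule eventually_mono) simp
    show "\<forall>\<^sub>F n in sequentially. (\<Sum>k=1..n. \<gamma> k *\<^sub>R
        (mat_prod_range (\<lambda>j. mat 1 + \<gamma> j *\<^sub>R A) (Suc k) (Suc n) *v \<zeta> k)) = (sqrt (\<gamma> n) * w n) *\<^sub>R v n"
      using eventually_ge_at_top[of 1] by (rule eventually_mono) (use noise1 in auto)
  qed (use running_average_nonneg[where N = N and b = "c/2" and g = \<gamma>, OF N] in auto)
  then obtain C where "\<forall>\<^sub>F n in sequentially. (norm (x n))\<^sup>2 / \<gamma> n \<le> C * (1 + ?R n + (norm (v n))\<^sup>2)"
    by blast
  with \<gamma>pos' have "\<forall>\<^sub>F n in sequentially. \<bar>(norm (x n))\<^sup>2 / \<gamma> n\<bar> \<le> C * (1 + ?R n + (norm (v n))\<^sup>2)"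
    by eventually_elim simp
  moreover have "1 \<le> 1 + ?R n + (norm (v n))\<^sup>2" for n
    using running_average_nonneg[where N = N and b = "c/2" and g = \<gamma>, OF N] by simp
  ultimately show ?thesis
    using eventually_le_multiple_imp_le_multiple[where f = "\<lambda>n. \<bar>(norm (x n))\<^sup>2 / \<gamma> n\<bar>"
      and z = "\<lambda>n. 1 + ?R n + (norm (v n))\<^sup>2"] by blast
qed

end

theorem lemma1:
  fixes M :: "'a measure"
    and \<gamma> :: "nat \<Rightarrow> real"
    and A :: "real^'d^'d"
    and x \<zeta>1 \<zeta>2 :: "nat \<Rightarrow> 'a \<Rightarrow> real^'d"
  assumes "prob_space M"
    and gpos: "\<forall>n\<ge>1. \<gamma> n > 0"
    and gdiv: "\<not> summable \<gamma>"
    and gsq: "summable (\<lambda>k. (\<gamma> k)\<^sup>2)"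
    and glog: "(\<lambda>k. ln (\<gamma> k / \<gamma> (Suc k))) \<in> o(\<lambda>k. \<gamma> (Suc k))"
    and hurw: "hurwitz A"
    and xmeas: "\<forall>n. x n \<in> borel_measurable M"
    and z1meas: "\<forall>n. \<zeta>1 n \<in> borel_measurable M"
    and z2meas: "\<forall>n. \<zeta>2 n \<in> borel_measurable M"
    and rec: "\<forall>n. \<forall>\<omega>\<in>space M. x (Suc n) \<omega> =
        x n \<omega> + \<gamma> (Suc n) *\<^sub>R (A *v x n \<omega>) + \<gamma> (Suc n) *\<^sub>R \<zeta>1 (Suc n) \<omega>
          + \<gamma> (Suc n) *\<^sub>R \<zeta>2 (Suc n) \<omega>"
    and noise1: "\<exists>W Wb. O_wp1 M W \<and> O_Lp M 2 Wb \<and>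
        (\<forall>n\<ge>1. \<forall>\<omega>\<in>space M.
           indicator {\<omega>\<in>space M. (\<lambda>q. x q \<omega>) \<longlonglongrightarrow> 0} \<omega> *\<^sub>R
             (\<Sum>k=1..n. \<gamma> k *\<^sub>R
                (mat_prod_range (\<lambda>j. mat 1 + \<gamma> j *\<^sub>R A) (Suc k) (Suc n) *v \<zeta>1 k \<omega>))
           = (sqrt (\<gamma> n) * W n \<omega>) *\<^sub>R Wb n \<omega>)"
    and noise2: "\<exists>W. O_wp1 M W \<and>
        (\<forall>n\<ge>1. \<forall>\<omega>\<in>space M.
           norm (\<zeta>2 n \<omega>) * indicator {\<omega>\<in>space M. (\<lambda>q. x q \<omega>) \<longlonglongrightarrow> 0} \<omega>
           = (norm (x n \<omega>))\<^sup>2 * W n \<omega>)"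
  shows "\<exists>W (Wb :: nat \<Rightarrow> 'a \<Rightarrow> real). O_wp1 M W \<and> O_Lp M 1 Wb \<and>
        (\<forall>n\<ge>1. \<forall>\<omega>\<in>space M.
           (norm (x n \<omega>))\<^sup>2 / \<gamma> n * indicator {\<omega>\<in>space M. (\<lambda>q. x q \<omega>) \<longlonglongrightarrow> 0} \<omega>
           = W n \<omega> * Wb n \<omega>)"
proof -
  interpret prob_space M by fact
  obtain nrm c h K where "euler_contraction A nrm c h K"
    using hurwitz_euler_contraction[OF hurw] by blast
  then interpret euler_contraction A nrm c h K .
  obtain N where N: "\<And>m. N \<le> m \<Longrightarrow> 0 \<le> 1 - c/2 * \<gamma> (Suc m) \<and> 0 \<le> \<gamma> (Suc m)"
    using damping_factors_eventually_nonneg[OF gsq gpos, of "c/2"] c_pos by auto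
  obtain W1 Wb where W1: "O_wp1 M W1" and Wb: "O_Lp M 2 Wb" and eq1: "\<forall>n\<ge>1. \<forall>\<omega>\<in>space M.
      indicator {\<omega>\<in>space M. (\<lambda>q. x q \<omega>) \<longlonglongrightarrow> 0} \<omega> *\<^sub>R
        (\<Sum>k=1..n. \<gamma> k *\<^sub>R (mat_prod_range (\<lambda>j. mat 1 + \<gamma> j *\<^sub>R A) (Suc k) (Suc n) *v \<zeta>1 k \<omega>))
      = (sqrt (\<gamma> n) * W1 n \<omega>) *\<^sub>R Wb n \<omega>"
    using noise1 by blast
  obtain W2 where W2: "O_wp1 M W2" and eq2: "\<forall>n\<ge>1. \<forall>\<omega>\<in>space M.
      norm (\<zeta>2 n \<omega>) * indicator {\<omega>\<in>space M. (\<lambda>q. x q \<omega>) \<longlonglongrightarrow> 0} \<omega> = (norm (x n \<omega>))\<^sup>2 * W2 n \<omega>"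
    using noise2 by blast
  define Cv where "Cv = {\<omega>\<in>space M. (\<lambda>q. x q \<omega>) \<longlonglongrightarrow> 0}"
  define f where "f n \<omega> = (norm (x n \<omega>))\<^sup>2 / \<gamma> n * indicator Cv \<omega>" for n \<omega>
  define Z where "Z n \<omega> = 1 + running_average N (c/2) \<gamma> (\<lambda>m. (norm (Wb m \<omega>))\<^sup>2) n + (norm (Wb n \<omega>))\<^sup>2"
    for n \<omega>
  have Z1: "1 \<le> Z n \<omega>" for n \<omega>
    using running_average_nonneg[where N = N and b = "c/2" and g = \<gamma>, OF N] by (simp add: Z_def)
  have Z: "O_Lp M 1 Z"
    unfolding Z_def[abs_def] by (rule running_average_O_Lp[OF Wb]) (use c_pos N in auto)
  have "AE \<omega> in M. \<exists>B. \<forall>n. \<bar>W1 n \<omega>\<bar> \<le> B" "AE \<omega> in M. \<exists>B. \<forall>n. \<bar>W2 n \<omega>\<bar> \<le> B"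
    using W1 W2 by (simp_all add: O_wp1_def)
  then have "AE \<omega> in M. \<exists>C. \<forall>n. \<bar>f n \<omega>\<bar> \<le> C * Z n \<omega>"
    using AE_space
  proof eventually_elim
    case (elim \<omega>)
    then obtain B1 B2 where B1: "\<And>n. \<bar>W1 n \<omega>\<bar> \<le> B1" and B2: "\<And>n. \<bar>W2 n \<omega>\<bar> \<le> B2" by blast
    show ?case
    proof (cases "\<omega> \<in> Cv")
      case True
      hence "indicator {\<omega>\<in>space M. (\<lambda>q. x q \<omega>) \<longlonglongrightarrow> 0} \<omega> = (1::real)" "(\<lambda>n. x n \<omega>) \<longlonglongrightarrow> 0"
        by (simp_all add: Cv_def)
      hence "\<exists>C. \<forall>n. \<bar>(norm (x n \<omega>))\<^sup>2 / \<gamma> n\<bar> \<le> C * Z n \<omega>"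
        unfolding Z_def using rec elim(3) eq1[rule_format, OF _ elim(3)] eq2[rule_format, OF _ elim(3)] B1 B2
        by (intro convergent_trajectory_bound[OF gpos gsq glog N, where x = "\<lambda>n. x n \<omega>"
            and \<zeta> = "\<lambda>n. \<zeta>1 n \<omega>" and \<xi> = "\<lambda>n. \<zeta>2 n \<omega>" and v = "\<lambda>n. Wb n \<omega>"
            and w = "\<lambda>n. W1 n \<omega>" and w' = "\<lambda>n. W2 n \<omega>"]) auto
      thus ?thesis using True by (simp add: f_def)
    qed (use Z1 in \<open>auto simp: f_def intro: exI[of _ 0]\<close>)
  qed
  moreover have "f n \<in> borel_measurable M" for n
  proof -
    have [measurable]: "x n \<in> borel_measurable M" for n using xmeas by blast
    have [measurable]: "Cv \<in> sets M" unfolding Cv_def by measurable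
    show ?thesis unfolding f_def by measurable
  qed
  ultimately have "O_wp1 M (\<lambda>n \<omega>. f n \<omega> / Z n \<omega>)"
    using Z Z1 by (intro O_wp1_divide) (auto simp: O_Lp_def)
  moreover have "\<forall>n\<ge>1. \<forall>\<omega>\<in>space M. (norm (x n \<omega>))\<^sup>2 / \<gamma> n * indicator Cv \<omega>
      = f n \<omega> / Z n \<omega> * Z n \<omega>"
    using Z1 by (simp add: f_def) (metis not_one_le_zero)
  ultimately show ?thesis using Z unfolding Cv_def by blast
qed

end
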